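(* Let $\mathcal{E}=(\mathbf{R},\mathbf{S},\Sigma_{st},\mathbf{F})$ be a constructive relational to RDF data exchange setting in which every st-tgd head is a single atom, with $\mathbf{R}=(\mathcal{R},\Sigma_{fd})$ and $\mathbf{S}=(\mathcal{T},\delta)$. For any $(T,f)\in\mathcal{T}\times\mathcal{F}$: $(T,f)$ is accessible in $\mathcal{E}$ if and only if there exist an instance $I$ of $\mathcal{R}$ (not necessarily satisfying $\Sigma_{fd}$) and a tuple $\bar a$ of constants in the active domain of $I$ such that the core pre-solution for $I$ to $\mathcal{E}$ contains the fact $T(f^F(\bar a))$.
   Context: Values: $\mathsf{Iri}$ (IRIs, containing predicates $\mathsf{Pred}$), $\mathsf{NullIri}$, $\mathsf{Lit}$ with null literals $\mathsf{NullLit}\subseteq\mathsf{Lit}$; non-null values are constants. $\mathbf{R}=(\mathcal{R},\Sigma_{fd})$: relation names with arities and functional dependencies; an instance of $\mathcal{R}$ assigns finite sets of tuples of non-null literals to relation names. A deterministic shape schema $\mathbf{S}=(\mathcal{T},\delta)$ has a partial function $\delta:\mathcal{T}\times\mathsf{Pred}\to(\mathcal{T}\cup\{\mathit{Literal}\})\times\{1,?,*,+\}$, written $\delta(T,p)=S^\mu$. An IRI constructor library $\mathbf{F}=(\mathcal{F},F)$ interprets each $n$-ary $f\in\mathcal{F}$ as $f^F:\mathsf{Lit}^n\to\mathsf{Iri}$ (constants); constructive means: ranges of distinct constructors are disjoint and all st-tgds are full, of the form $\forall\bar x.\,\varphi\Rightarrow\psi$ with $\varphi$ a conjunction of atoms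 over $\mathcal{R}$ and $\psi$ an atom $\mathit{Triple}(t_1,p,t_2)$ ($p\in\mathsf{Pred}$), $T(t)$ or $\mathit{Literal}(t)$, with terms variables or $f(\bar u)$ for a tuple of variables $\bar u$. The core pre-solution of $I$ is the least set $J_0$ of facts containing, for every st-tgd and every assignment $g$ of its variables making its body true in $I$, the head atom with terms evaluated ($f(\bar u)\mapsto f^F(g(\bar u))$), and closed under: $T(a),\mathit{Triple}(a,p,b)\in J_0$ and $\delta(T,p)=S^\mu$ imply $S(b)\in J_0$. $(T,f)$ is accessible in $\mathcal{E}$ (with the sequence $\sigma_0,\dots,\sigma_n$ of st-tgds) if there are types $T_0,\dots,T_n$, constructors $f_0,\dots,f_n$, predicates $p_1,\dots,p_n$ and tuples of variables $\bar x_i,\bar y_i$ such that the head of $\sigma_0$ is $T_0(f_0(\bar y_0))$, the head of $\sigma_i$ is $\mathit{Triple}(f_{i-1}(\bar x_i),p_i,f_i(\bar y_i))$ for $1\le i\le n$, $\delta(T_{i-1},p_i)=T_i^{\mu_i}$ for some $\mu_i$ for $1\le i\le n$, and $T=T_n$, $f=f_n$. *)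

theory Defs
  imports Main
begin

text \<open>IRIs are of type 'i (with distinguished subsets of predicates and of null IRIs),
literals of type 'l (with a distinguished subset of null literals).\<close>

datatype ('i, 'l) rval = IriV 'i | LitV 'l

datatype ('f, 'v) tterm = Var 'v | Fn 'f "'v list"

datatype ('T, 'i, 'f, 'v) head =
    TripleH "('f, 'v) tterm" 'i "('f, 'v) tterm"
  | TypeH 'T "('f, 'v) tterm"
  | LiteralH "('f, 'v) tterm"

text \<open>A (full) st-tgd: body = conjunction of relational atoms R(x1..xk), head = one atom.\<close>
type_synonym ('r, 'T, 'i, 'f, 'v) sttgd = "('r \<times> 'v list) list \<times> ('T, 'i, 'f, 'v) head"

datatype ('T, 'i, 'l) rfact =
    TripleF "('i, 'l) rval" 'i "('i, 'l) rval"
  | TypeF 'T "('i, 'l) rval"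
  | LiteralF "('i, 'l) rval"

datatype 'T stype = ShapeT 'T | LiteralT
datatype mult = One | Opt | Star | Plus

text \<open>A deterministic shape schema is given by a partial function
  delta :: 'T => 'i => ('T stype * mult) option  (defined only on predicates).\<close>

fun stype_fact :: "'T stype \<Rightarrow> ('i, 'l) rval \<Rightarrow> ('T, 'i, 'l) rfact" where
  "stype_fact (ShapeT S) b = TypeF S b"
| "stype_fact LiteralT b = LiteralF b"

fun tterm_vars :: "('f, 'v) tterm \<Rightarrow> 'v set" where
  "tterm_vars (Var x) = {x}"
| "tterm_vars (Fn f us) = set us"

fun head_vars :: "('T, 'i, 'f, 'v) head \<Rightarrow> 'v set" where
  "head_vars (TripleH t1 p t2) = tterm_vars t1 \<union> tterm_vars t2"
| "head_vars (TypeH T t) = tterm_vars t"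
| "head_vars (LiteralH t) = tterm_vars t"

fun head_terms :: "('T, 'i, 'f, 'v) head \<Rightarrow> ('f, 'v) tterm set" where
  "head_terms (TripleH t1 p t2) = {t1, t2}"
| "head_terms (TypeH T t) = {t}"
| "head_terms (LiteralH t) = {t}"

definition body_vars :: "('r \<times> 'v list) list \<Rightarrow> 'v set" where
  "body_vars body = (\<Union>(r, xs) \<in> set body. set xs)"

definition wf_sttgd ::
  "'r set \<Rightarrow> ('r \<Rightarrow> nat) \<Rightarrow> ('f \<Rightarrow> nat) \<Rightarrow> 'i set \<Rightarrow> ('r, 'T, 'i, 'f, 'v) sttgd \<Rightarrow> bool" where
  "wf_sttgd Rel arity farity Pred \<sigma> \<longleftrightarrow>
     (\<forall>(r, xs) \<in> set (fst \<sigma>). r \<in> Rel \<and> length xs = arity r) \<and>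
     (\<forall>t \<in> head_terms (snd \<sigma>). \<forall>f us. t = Fn f us \<longrightarrow> length us = farity f) \<and>
     (\<forall>t1 p t2. snd \<sigma> = TripleH t1 p t2 \<longrightarrow> p \<in> Pred \<and> (\<exists>f us. t1 = Fn f us)) \<and>
     head_vars (snd \<sigma>) \<subseteq> body_vars (fst \<sigma>)"

text \<open>A functional dependency of relation r: a pair of sets of attribute positions (X, Y).\<close>
definition wf_rschema :: "'r set \<Rightarrow> ('r \<Rightarrow> nat) \<Rightarrow> ('r \<times> nat set \<times> nat set) set \<Rightarrow> bool" where
  "wf_rschema Rel arity fds \<longleftrightarrow> finite Rel \<and>
     (\<forall>(r, X, Y) \<in> fds. r \<in> Rel \<and> X \<subseteq> {0..<arity r} \<and> Y \<subseteq> {0..<arity r})"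

text \<open>An instance of the relational schema (functional dependencies NOT required):
  finite sets of tuples of non-null literals of the right arity.\<close>
definition is_instance ::
  "'r set \<Rightarrow> ('r \<Rightarrow> nat) \<Rightarrow> 'l set \<Rightarrow> ('r \<Rightarrow> 'l list set) \<Rightarrow> bool" where
  "is_instance Rel arity NullLit I \<longleftrightarrow>
     (\<forall>r. r \<notin> Rel \<longrightarrow> I r = {}) \<and>
     (\<forall>r \<in> Rel. finite (I r) \<and> (\<forall>t \<in> I r. length t = arity r \<and> set t \<inter> NullLit = {}))"

definition adom :: "('r \<Rightarrow> 'l list set) \<Rightarrow> 'l set" where
  "adom I = (\<Union>r. \<Union>t \<in> I r. set t)"

definition constructive_setting ::
  "'i set \<Rightarrow> 'i set \<Rightarrow> 'l set \<Rightarrow>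
   'r set \<Rightarrow> ('r \<Rightarrow> nat) \<Rightarrow> ('r \<times> nat set \<times> nat set) set \<Rightarrow>
   ('T \<Rightarrow> 'i \<Rightarrow> ('T stype \<times> mult) option) \<Rightarrow>
   ('r, 'T, 'i, 'f, 'v) sttgd set \<Rightarrow>
   ('f \<Rightarrow> nat) \<Rightarrow> ('f \<Rightarrow> 'l list \<Rightarrow> 'i) \<Rightarrow> bool" where
  "constructive_setting Pred NullIri NullLit Rel arity fds \<delta> \<Sigma>st farity F \<longleftrightarrow>
     (\<exists>c. c \<notin> NullLit) \<and>
     Pred \<inter> NullIri = {} \<and>
     wf_rschema Rel arity fds \<and>
     (\<forall>T p. \<delta> T p \<noteq> None \<longrightarrow> p \<in> Pred) \<and>
     finite \<Sigma>st \<and> (\<forall>\<sigma> \<in> \<Sigma>st. wf_sttgd Rel arity farity Pred \<sigma>) \<and>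
     (\<forall>f as. length as = farity f \<longrightarrow> F f as \<notin> NullIri) \<and>
     (\<forall>f g as bs. f \<noteq> g \<longrightarrow> length as = farity f \<longrightarrow> length bs = farity g \<longrightarrow> F f as \<noteq> F g bs)"

fun eval_tterm :: "('f \<Rightarrow> 'l list \<Rightarrow> 'i) \<Rightarrow> ('v \<Rightarrow> 'l) \<Rightarrow> ('f, 'v) tterm \<Rightarrow> ('i, 'l) rval" where
  "eval_tterm F g (Var x) = LitV (g x)"
| "eval_tterm F g (Fn f us) = IriV (F f (map g us))"

fun eval_head :: "('f \<Rightarrow> 'l list \<Rightarrow> 'i) \<Rightarrow> ('v \<Rightarrow> 'l) \<Rightarrow> ('T, 'i, 'f, 'v) head \<Rightarrow> ('T, 'i, 'l) rfact" where
  "eval_head F g (TripleH t1 p t2) = TripleF (eval_tterm F g t1) p (eval_tterm F g t2)"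
| "eval_head F g (TypeH T t) = TypeF T (eval_tterm F g t)"
| "eval_head F g (LiteralH t) = LiteralF (eval_tterm F g t)"

definition body_true :: "('r \<Rightarrow> 'l list set) \<Rightarrow> ('v \<Rightarrow> 'l) \<Rightarrow> ('r \<times> 'v list) list \<Rightarrow> bool" where
  "body_true I g body \<longleftrightarrow> (\<forall>(r, xs) \<in> set body. map g xs \<in> I r)"

inductive_set core_pre ::
  "('T \<Rightarrow> 'i \<Rightarrow> ('T stype \<times> mult) option) \<Rightarrow> ('r, 'T, 'i, 'f, 'v) sttgd set \<Rightarrow>
   ('f \<Rightarrow> 'l list \<Rightarrow> 'i) \<Rightarrow> ('r \<Rightarrow> 'l list set) \<Rightarrow> ('T, 'i, 'l) rfact set"
  for \<delta> \<Sigma>st F I where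
  tgd: "\<sigma> \<in> \<Sigma>st \<Longrightarrow> body_true I g (fst \<sigma>) \<Longrightarrow> eval_head F g (snd \<sigma>) \<in> core_pre \<delta> \<Sigma>st F I"
| close: "TypeF T a \<in> core_pre \<delta> \<Sigma>st F I \<Longrightarrow> TripleF a p b \<in> core_pre \<delta> \<Sigma>st F I \<Longrightarrow>
          \<delta> T p = Some (S, \<mu>) \<Longrightarrow> stype_fact S b \<in> core_pre \<delta> \<Sigma>st F I"

definition accessible ::
  "('T \<Rightarrow> 'i \<Rightarrow> ('T stype \<times> mult) option) \<Rightarrow> ('r, 'T, 'i, 'f, 'v) sttgd set \<Rightarrow> 'T \<Rightarrow> 'f \<Rightarrow> bool" where
  "accessible \<delta> \<Sigma>st T f \<longleftrightarrow>
     (\<exists>(n::nat) (\<sigma>::nat \<Rightarrow> ('r, 'T, 'i, 'f, 'v) sttgd) (Ts::nat \<Rightarrow> 'T) (fs::nat \<Rightarrow> 'f)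
        (ps::nat \<Rightarrow> 'i) (xs::nat \<Rightarrow> 'v list) (ys::nat \<Rightarrow> 'v list) (\<mu>::nat \<Rightarrow> mult).
        (\<forall>i \<le> n. \<sigma> i \<in> \<Sigma>st) \<and>
        snd (\<sigma> 0) = TypeH (Ts 0) (Fn (fs 0) (ys 0)) \<and>
        (\<forall>i \<in> {1..n}. snd (\<sigma> i) = TripleH (Fn (fs (i - 1)) (xs i)) (ps i) (Fn (fs i) (ys i)) \<and>
                       \<delta> (Ts (i - 1)) (ps i) = Some (ShapeT (Ts i), \<mu> i)) \<and>
        T = Ts n \<and> f = fs n)"

end

theory Submission
  imports Defs
begin

text \<open>Accessibility is reachability along chains of st-tgds, so both directions are inductions.
  If \<open>(T, f)\<close> is accessible, take the instance that holds a single tuple \<open>(c, \<dots>, c)\<close> of a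
  non-null literal \<open>c\<close> in every relation: all (full) st-tgds fire under the constant assignment,
  the chain produces \<open>T\<^sub>0(f\<^sub>0(c, \<dots>, c))\<close> and then, via the triples and \<open>\<delta>\<close>, every
  \<open>T\<^sub>i(f\<^sub>i(c, \<dots>, c))\<close>; by safety \<open>c\<close> is in the active domain whenever it occurs.
  Conversely, a fact \<open>T(f(a))\<close> of the core pre-solution is either the head of an st-tgd or
  obtained by closing some \<open>T'(b)\<close> along a triple \<open>(b, p, f(a))\<close>, and triples only come from
  st-tgd heads \<open>Triple(f'(x), p, f(y))\<close>; since constructor ranges are disjoint, the
  constructor of such a head is determined by the IRI it produces.\<close>

inductive reachable ::
  "('T \<Rightarrow> 'i \<Rightarrow> ('T stype \<times> mult) option) \<Rightarrow> ('r, 'T, 'i, 'f, 'v) sttgd set \<Rightarrow> 'T \<Rightarrow> 'f \<Rightarrow> bool"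
  for \<delta> \<Sigma>st where
  start: "\<sigma> \<in> \<Sigma>st \<Longrightarrow> snd \<sigma> = TypeH T (Fn f ys) \<Longrightarrow> reachable \<delta> \<Sigma>st T f"
| step: "reachable \<delta> \<Sigma>st T' f' \<Longrightarrow> \<sigma> \<in> \<Sigma>st \<Longrightarrow> snd \<sigma> = TripleH (Fn f' xs) p (Fn f ys) \<Longrightarrow>
         \<delta> T' p = Some (ShapeT T, \<mu>) \<Longrightarrow> reachable \<delta> \<Sigma>st T f"

lemma accessibleE:
  assumes "accessible \<delta> \<Sigma>st T f"
  obtains n :: nat and \<sigma>s Ts fs yss xss ps \<mu>s where
    "\<forall>i \<le> n. \<sigma>s i \<in> \<Sigma>st"
    "snd (\<sigma>s 0) = TypeH (Ts 0) (Fn (fs 0) (yss 0))"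
    "\<forall>i \<in> {1..n}. snd (\<sigma>s i) = TripleH (Fn (fs (i - 1)) (xss i)) (ps i) (Fn (fs i) (yss i)) \<and>
                  \<delta> (Ts (i - 1)) (ps i) = Some (ShapeT (Ts i), \<mu>s i)"
    "T = Ts n" "f = fs n"
  using assms unfolding accessible_def by blast

lemma accessible_start:
  assumes "\<sigma> \<in> \<Sigma>st" "snd \<sigma> = TypeH T (Fn f ys)"
  shows "accessible \<delta> \<Sigma>st T f"
  unfolding accessible_def
  by (rule exI[of _ 0], rule exI[of _ "\<lambda>_. \<sigma>"], rule exI[of _ "\<lambda>_. T"], rule exI[of _ "\<lambda>_. f"])
    (use assms in auto)

lemma accessible_step:
  assumes "accessible \<delta> \<Sigma>st T' f'" "\<sigma> \<in> \<Sigma>st" "snd \<sigma> = TripleH (Fn f' xs) p (Fn f ys)"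
    and "\<delta> T' p = Some (ShapeT T, \<mu>)"
  shows "accessible \<delta> \<Sigma>st T f"
proof -
  obtain n :: nat and \<sigma>s Ts fs yss xss ps \<mu>s where
    chain: "\<forall>i \<le> n. \<sigma>s i \<in> \<Sigma>st"
      "snd (\<sigma>s 0) = TypeH (Ts 0) (Fn (fs 0) (yss 0))"
      "\<forall>i \<in> {1..n}. snd (\<sigma>s i) = TripleH (Fn (fs (i - 1)) (xss i)) (ps i) (Fn (fs i) (yss i)) \<and>
                    \<delta> (Ts (i - 1)) (ps i) = Some (ShapeT (Ts i), \<mu>s i)"
      "T' = Ts n" "f' = fs n"
    using assms(1) by (rule accessibleE)
  have "\<forall>i \<in> {1..Suc n}.
      snd ((\<sigma>s(Suc n := \<sigma>)) i) = TripleH (Fn ((fs(Suc n := f)) (i - 1)) ((xss(Suc n := xs)) i))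
        ((ps(Suc n := p)) i) (Fn ((fs(Suc n := f)) i) ((yss(Suc n := ys)) i)) \<and>
      \<delta> ((Ts(Suc n := T)) (i - 1)) ((ps(Suc n := p)) i) =
        Some (ShapeT ((Ts(Suc n := T)) i), (\<mu>s(Suc n := \<mu>)) i)" (is "\<forall>i \<in> _. ?link i")
  proof
    fix i assume "i \<in> {1..Suc n}"
    then consider "i = Suc n" | "i \<in> {1..n}" by fastforce
    then show "?link i" by cases (use chain assms in auto)
  qed
  moreover have "\<forall>i \<le> Suc n. (\<sigma>s(Suc n := \<sigma>)) i \<in> \<Sigma>st"
    using chain(1) assms(2) by (auto simp: le_Suc_eq)
  ultimately show ?thesis
    unfolding accessible_def using chain(2)
    by (intro exI[of _ "Suc n"] exI[of _ "\<sigma>s(Suc n := \<sigma>)"] exI[of _ "Ts(Suc n := T)"]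
        exI[of _ "fs(Suc n := f)"] exI[of _ "ps(Suc n := p)"] exI[of _ "xss(Suc n := xs)"]
        exI[of _ "yss(Suc n := ys)"] exI[of _ "\<mu>s(Suc n := \<mu>)"]) simp
qed

lemma reachable_if_accessible:
  assumes "accessible \<delta> \<Sigma>st T f"
  shows "reachable \<delta> \<Sigma>st T f"
proof -
  obtain n :: nat and \<sigma>s Ts fs yss xss ps \<mu>s where
    chain: "\<forall>i \<le> n. \<sigma>s i \<in> \<Sigma>st"
      "snd (\<sigma>s 0) = TypeH (Ts 0) (Fn (fs 0) (yss 0))"
      "\<forall>i \<in> {1..n}. snd (\<sigma>s i) = TripleH (Fn (fs (i - 1)) (xss i)) (ps i) (Fn (fs i) (yss i)) \<and>
                    \<delta> (Ts (i - 1)) (ps i) = Some (ShapeT (Ts i), \<mu>s i)"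
      "T = Ts n" "f = fs n"
    using assms by (rule accessibleE)
  have "reachable \<delta> \<Sigma>st (Ts i) (fs i)" if "i \<le> n" for i
    using that
  proof (induction i)
    case 0
    then show ?case using chain(1,2) by (auto intro: reachable.start)
  next
    case (Suc i)
    then have "Suc i \<in> {1..n}" by simp
    then show ?case using Suc chain(1,3) by (force intro: reachable.step)
  qed
  then show ?thesis using chain(4,5) by simp
qed

lemma accessible_iff_reachable: "accessible \<delta> \<Sigma>st T f \<longleftrightarrow> reachable \<delta> \<Sigma>st T f"
proof
  show "reachable \<delta> \<Sigma>st T f \<Longrightarrow> accessible \<delta> \<Sigma>st T f"
    by (induction rule: reachable.induct) (auto intro: accessible_start accessible_step)
qed (rule reachable_if_accessible)

lemma wf_sttgd_head_term_length:
  assumes "wf_sttgd Rel arity farity Pred \<sigma>" "Fn f us \<in> head_terms (snd \<sigma>)"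
  shows "length us = farity f"
  using assms unfolding wf_sttgd_def by blast

lemma wf_sttgd_triple_subject:
  assumes "wf_sttgd Rel arity farity Pred \<sigma>" "snd \<sigma> = TripleH t1 p t2"
  obtains f us where "t1 = Fn f us"
  using assms unfolding wf_sttgd_def by blast

definition disjoint_constructor_ranges :: "('f \<Rightarrow> nat) \<Rightarrow> ('f \<Rightarrow> 'l list \<Rightarrow> 'i) \<Rightarrow> bool" where
  "disjoint_constructor_ranges farity F \<longleftrightarrow>
     (\<forall>f g as bs. f \<noteq> g \<longrightarrow> length as = farity f \<longrightarrow> length bs = farity g \<longrightarrow> F f as \<noteq> F g bs)"

lemma eval_tterm_eq_constructor:
  assumes disjoint: "disjoint_constructor_ranges farity F"
    and term_lengths: "\<And>f' us. t = Fn f' us \<Longrightarrow> length us = farity f'"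
    and "eval_tterm F g t = IriV (F f as)" "length as = farity f"
  obtains us where "t = Fn f us"
proof (cases t)
  case (Fn f' us)
  with assms have "F f' (map g us) = F f as" "length (map g us) = farity f'" by auto
  with disjoint \<open>length as = farity f\<close> have "f' = f"
    unfolding disjoint_constructor_ranges_def by blast
  with Fn that show ?thesis by blast
qed (use assms in simp)

lemma TripleF_in_core_preE:
  assumes "TripleF a p b \<in> core_pre \<delta> \<Sigma>st F I"
  obtains \<sigma> g t1 t2 where "\<sigma> \<in> \<Sigma>st" "body_true I g (fst \<sigma>)" "snd \<sigma> = TripleH t1 p t2"
    "a = eval_tterm F g t1" "b = eval_tterm F g t2"
  using assms
proof cases
  case (tgd \<sigma> g)
  then show ?thesis using that by (cases "snd \<sigma>") auto
next
  case (close T a p b S \<mu>)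
  then show ?thesis by (cases S) auto
qed

lemma reachable_if_TypeF_in_core_pre:
  assumes wf: "\<forall>\<sigma> \<in> \<Sigma>st. wf_sttgd Rel arity farity Pred \<sigma>"
    and disjoint: "disjoint_constructor_ranges farity F"
  shows "x \<in> core_pre \<delta> \<Sigma>st F I \<Longrightarrow> x = TypeF T (IriV (F f as)) \<Longrightarrow> length as = farity f \<Longrightarrow>
           reachable \<delta> \<Sigma>st T f"
proof (induction arbitrary: T f as rule: core_pre.induct)
  case (tgd \<sigma> g)
  then obtain t where head: "snd \<sigma> = TypeH T t" "eval_tterm F g t = IriV (F f as)"
    by (cases "snd \<sigma>") auto
  moreover have "\<And>f' us. t = Fn f' us \<Longrightarrow> length us = farity f'"
    using wf tgd(1) head(1) by (auto intro: wf_sttgd_head_term_length)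
  ultimately obtain ys where "t = Fn f ys"
    using eval_tterm_eq_constructor[OF disjoint] tgd(4) by metis
  with head tgd(1) show ?case by (auto intro: reachable.start)
next
  case (close T' a p b S \<mu>)
  then have S: "S = ShapeT T" and b: "b = IriV (F f as)" by (cases S; simp)+
  obtain \<sigma> g t1 t2 where \<sigma>: "\<sigma> \<in> \<Sigma>st" "snd \<sigma> = TripleH t1 p t2"
    and a: "a = eval_tterm F g t1" and b_eval: "b = eval_tterm F g t2"
    using TripleF_in_core_preE[OF close(2)] by metis
  obtain f' xs where t1: "t1 = Fn f' xs"
    using wf \<sigma> by (blast elim: wf_sttgd_triple_subject)
  have "length xs = farity f'"
    using wf \<sigma> t1 by (auto intro: wf_sttgd_head_term_length)
  with a t1 have "reachable \<delta> \<Sigma>st T' f'"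
    by (intro close.IH(1)[of T' f' "map g xs"]) auto
  moreover have "\<And>f' us. t2 = Fn f' us \<Longrightarrow> length us = farity f'"
    using wf \<sigma> by (auto intro: wf_sttgd_head_term_length)
  then obtain ys where "t2 = Fn f ys"
    using eval_tterm_eq_constructor[OF disjoint] b b_eval close(7) by metis
  ultimately show ?case
    using \<sigma> t1 close(3) S by (auto intro: reachable.step)
qed

definition const_instance :: "'r set \<Rightarrow> ('r \<Rightarrow> nat) \<Rightarrow> 'l \<Rightarrow> 'r \<Rightarrow> 'l list set" where
  "const_instance Rel arity c r = (if r \<in> Rel then {replicate (arity r) c} else {})"

lemma is_instance_const_instance:
  assumes "c \<notin> NullLit"
  shows "is_instance Rel arity NullLit (const_instance Rel arity c)"
  using assms unfolding is_instance_def const_instance_def by auto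

lemma body_true_const_instance:
  assumes "wf_sttgd Rel arity farity Pred \<sigma>"
  shows "body_true (const_instance Rel arity c) (\<lambda>_. c) (fst \<sigma>)"
  using assms unfolding body_true_def wf_sttgd_def const_instance_def
  by (auto simp: map_replicate_const)

lemma head_terms_vars_subset:
  "t \<in> head_terms h \<Longrightarrow> tterm_vars t \<subseteq> head_vars h"
  by (cases h) auto

lemma body_true_vars_in_adom:
  assumes "body_true I g body" "x \<in> body_vars body"
  shows "g x \<in> adom I"
  using assms unfolding body_true_def body_vars_def adom_def by fastforce

lemma TypeF_const_in_core_pre_if_reachable:
  assumes wf: "\<forall>\<sigma> \<in> \<Sigma>st. wf_sttgd Rel arity farity Pred \<sigma>"
  shows "reachable \<delta> \<Sigma>st T f \<Longrightarrow>
    TypeF T (IriV (F f (replicate (farity f) c))) \<in> core_pre \<delta> \<Sigma>st F (const_instance Rel arity c)"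
proof (induction rule: reachable.induct)
  case (start \<sigma> T f ys)
  then have "length ys = farity f"
    using wf by (auto intro: wf_sttgd_head_term_length)
  then show ?case
    using core_pre.tgd[OF start(1) body_true_const_instance] wf start
    by (force simp: map_replicate_const)
next
  case (step T' f' \<sigma> xs p f ys T \<mu>)
  then have "length xs = farity f'" "length ys = farity f"
    using wf by (auto intro: wf_sttgd_head_term_length)
  then have "TripleF (IriV (F f' (replicate (farity f') c))) p (IriV (F f (replicate (farity f) c)))
      \<in> core_pre \<delta> \<Sigma>st F (const_instance Rel arity c)"
    using core_pre.tgd[OF step(2) body_true_const_instance] wf step
    by (force simp: map_replicate_const)
  from core_pre.close[OF step.IH this step(4)] show ?case by simp
qed

lemma replicate_in_adom_if_reachable:
  assumes wf: "\<forall>\<sigma> \<in> \<Sigma>st. wf_sttgd Rel arity farity Pred \<sigma>"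
    and "reachable \<delta> \<Sigma>st T f"
  shows "set (replicate (farity f) c) \<subseteq> adom (const_instance Rel arity c)"
proof -
  obtain \<sigma> ys where \<sigma>: "\<sigma> \<in> \<Sigma>st" "Fn f ys \<in> head_terms (snd \<sigma>)"
    using assms(2) by cases force+
  then have wf\<sigma>: "wf_sttgd Rel arity farity Pred \<sigma>" using wf by blast
  with \<sigma> have "length ys = farity f" by (intro wf_sttgd_head_term_length)
  moreover have "set ys \<subseteq> body_vars (fst \<sigma>)"
    using wf\<sigma> head_terms_vars_subset[OF \<sigma>(2)] unfolding wf_sttgd_def by auto
  ultimately show ?thesis
    using body_true_vars_in_adom[OF body_true_const_instance[OF wf\<sigma>]]
    by (cases ys) (auto simp: map_replicate_const)
qed

theorem lemma1:
  fixes Pred NullIri :: "'i set" and NullLit :: "'l set"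
    and Rel :: "'r set" and arity :: "'r \<Rightarrow> nat" and fds :: "('r \<times> nat set \<times> nat set) set"
    and \<delta> :: "'T \<Rightarrow> 'i \<Rightarrow> ('T stype \<times> mult) option"
    and \<Sigma>st :: "('r, 'T, 'i, 'f, 'v) sttgd set"
    and farity :: "'f \<Rightarrow> nat" and F :: "'f \<Rightarrow> 'l list \<Rightarrow> 'i"
    and T :: 'T and f :: 'f
  assumes "constructive_setting Pred NullIri NullLit Rel arity fds \<delta> \<Sigma>st farity F"
  shows "accessible \<delta> \<Sigma>st T f \<longleftrightarrow>
           (\<exists>I as. is_instance Rel arity NullLit I \<and>
                   length as = farity f \<and> set as \<subseteq> adom I \<and>
                   TypeF T (IriV (F f as)) \<in> core_pre \<delta> \<Sigma>st F I)"
proof -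
  obtain c where c: "c \<notin> NullLit"
    and wf: "\<forall>\<sigma> \<in> \<Sigma>st. wf_sttgd Rel arity farity Pred \<sigma>"
    and disjoint: "disjoint_constructor_ranges farity F"
    using assms unfolding constructive_setting_def disjoint_constructor_ranges_def by blast
  show ?thesis
    unfolding accessible_iff_reachable
  proof
    assume "reachable \<delta> \<Sigma>st T f"
    then show "\<exists>I as. is_instance Rel arity NullLit I \<and> length as = farity f \<and>
        set as \<subseteq> adom I \<and> TypeF T (IriV (F f as)) \<in> core_pre \<delta> \<Sigma>st F I"
      using is_instance_const_instance[OF c] TypeF_const_in_core_pre_if_reachable[OF wf]
        replicate_in_adom_if_reachable[OF wf \<open>reachable \<delta> \<Sigma>st T f\<close>]
      by (intro exI[of _ "const_instance Rel arity c"] exI[of _ "replicate (farity f) c"]) auto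
  qed (use reachable_if_TypeF_in_core_pre[OF wf disjoint] in blast)
qed

end
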